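(* A Borel probability measure $\pi$ on $[0,1]$ is a minimax prior if and only if $\int_{[0,1]}\theta\,\pi(d\theta)=1/2$ and $\int_{[0,1]}\theta^2\,\pi(d\theta)=2/5$.
   Context: Bernoulli model: for $\theta\in[0,1]$, $p_\theta(x)=\theta^x(1-\theta)^{1-x}$, $x\in\{0,1\}$. One observes $x\sim p_\theta$ and predicts an independent future $y\sim p_\theta$. A nonrandomized decision is a pair $\delta=(\delta_0,\delta_1)\in\mathcal D=[0,1]^2$, used as the predictive distribution $p_\delta(y\mid x)=\delta_x^{\,y}(1-\delta_x)^{1-y}$. The Kullback–Leibler risk is $R_\delta(\theta)=-S(\theta)+\theta^2\log\frac1{\delta_1}+\theta(1-\theta)\log\frac1{1-\delta_1}+\theta(1-\theta)\log\frac1{\delta_0}+(1-\theta)^2\log\frac1{1-\delta_0}\in[0,+\infty]$, where $S(\theta)=-\theta\log\theta-(1-\theta)\log(1-\theta)$ is the binary entropy, with conventions $0\log 0=0$, $\log(1/0)=+\infty$, $0\cdot(+\infty)=0$. A decision is minimax if it minimizes $\sup_{\theta\in[0,1]}R_\delta(\theta)$ over $\mathcal D$. A prior is a Borel probability measure $\pi$ on $[0,1]$; a decision $\delta$ is Bayes with respect to $\pi$ if it minimizes $\int_{[0,1]}R_\delta(\theta)\,\pi(d\theta)$ over $\mathcal D$. A prior $\pi$ is called a minimax prior if a Bayes decision with respect to $\pi$ is minimax. *)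

theory Defs
  imports "HOL-Probability.Probability"
begin

definition xlog :: "real \<Rightarrow> real \<Rightarrow> ereal" where
  "xlog c d = (if c = 0 then 0 else if d = 0 then \<infinity> else ereal (c * ln (1 / d)))"

definition plogp :: "real \<Rightarrow> real" where
  "plogp x = (if x = 0 then 0 else x * ln x)"

definition bin_entropy :: "real \<Rightarrow> real" where
  "bin_entropy t = - plogp t - plogp (1 - t)"

definition decisions :: "(real \<times> real) set" where
  "decisions = {0..1} \<times> {0..1}"

definition KL_risk :: "real \<times> real \<Rightarrow> real \<Rightarrow> ereal" where
  "KL_risk \<delta> \<theta> = ereal (- bin_entropy \<theta>)
     + xlog (\<theta>\<^sup>2) (snd \<delta>)
     + xlog (\<theta> * (1 - \<theta>)) (1 - snd \<delta>)
     + xlog (\<theta> * (1 - \<theta>)) (fst \<delta>)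
     + xlog ((1 - \<theta>)\<^sup>2) (1 - fst \<delta>)"

definition max_risk :: "real \<times> real \<Rightarrow> ereal" where
  "max_risk \<delta> = (SUP \<theta>\<in>{0..1}. KL_risk \<delta> \<theta>)"

definition is_minimax :: "real \<times> real \<Rightarrow> bool" where
  "is_minimax \<delta> \<longleftrightarrow> \<delta> \<in> decisions \<and> (\<forall>\<delta>'\<in>decisions. max_risk \<delta> \<le> max_risk \<delta>')"

definition bayes_risk :: "real measure \<Rightarrow> real \<times> real \<Rightarrow> ennreal" where
  "bayes_risk \<pi> \<delta> = (\<integral>\<^sup>+ \<theta>. indicator {0..1} \<theta> * e2ennreal (KL_risk \<delta> \<theta>) \<partial>\<pi>)"

definition is_bayes :: "real measure \<Rightarrow> real \<times> real \<Rightarrow> bool" where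
  "is_bayes \<pi> \<delta> \<longleftrightarrow> \<delta> \<in> decisions \<and> (\<forall>\<delta>'\<in>decisions. bayes_risk \<pi> \<delta> \<le> bayes_risk \<pi> \<delta>')"

definition minimax_prior :: "real measure \<Rightarrow> bool" where
  "minimax_prior \<pi> \<longleftrightarrow> (\<exists>\<delta>. is_bayes \<pi> \<delta> \<and> is_minimax \<delta>)"

end

theory Submission
  imports Defs "HOL-Real_Asymp.Real_Asymp"
begin

(* The unique minimax decision is delta* = (1/5, 4/5), and its maximal risk is ln 5 - 2 ln 2.
   Upper bound: the risk of delta* at theta equals ln 5 - 2 ln 2 - (S(theta) - 4 ln 2 theta(1-theta)),
   so it suffices that the binary entropy S dominates 4 ln 2 theta(1-theta); writing
   theta = (1-x)/2 this becomes phi(x) <= 2 ln 2 x^2 for phi(x) = (1+x)ln(1+x) + (1-x)ln(1-x),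
   which follows because phi(x)/x^2 increases to 2 ln 2.
   Lower bound and uniqueness: averaging the risk at theta = 0, 1/2, 1 with weights 3/10, 2/5, 3/10
   (a least favourable prior) turns it into two log-scores, which Gibbs' inequality bounds.

   For a prior with mean m1 and second moment m2 the Bayes risk of an interior decision is an
   explicit combination of logarithms with coefficients m1, m2 (bayes_value).  With m1 = 1/2,
   m2 = 2/5 it is again governed by Gibbs' inequality, so delta* is Bayes; conversely, if delta*
   is Bayes, stationarity of bayes_value at delta* forces these two moments.  Since delta* is the
   only minimax decision, a prior is minimax iff delta* is Bayes for it, which gives corollary1. *)

text \<open>The inequality ln x <= x - 1 (with equality only at x = 1) applied to x = d/t and scaled by t;
  summing two instances gives Gibbs' inequality.\<close>
lemma ln_ratio_le:
  fixes t d :: real assumes "0 < t" "0 < d"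
  shows "t * (ln d - ln t) \<le> d - t"
    and "d \<noteq> t \<Longrightarrow> t * (ln d - ln t) < d - t"
proof -
  have ln_eq: "ln d - ln t = ln (d / t)" using assms by (simp add: ln_div)
  have le: "ln (d / t) \<le> d / t - 1" using assms by (intro ln_le_minus_one) auto
  have scale: "t * (d / t - 1) = d - t" using assms by (simp add: field_simps)
  show "t * (ln d - ln t) \<le> d - t"
    using mult_left_mono[OF le, of t] assms unfolding ln_eq scale by simp
  assume "d \<noteq> t"
  then have "ln (d / t) \<noteq> d / t - 1" using assms ln_eq_minus_one[of "d / t"] by auto
  then have "ln (d / t) < d / t - 1" using le by simp
  then show "t * (ln d - ln t) < d - t"
    using mult_strict_left_mono[of "ln (d / t)" "d / t - 1" t] assms unfolding ln_eq scale by simp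
qed

definition log_score :: "real \<Rightarrow> real \<Rightarrow> real" where
  "log_score t d = t * ln d + (1 - t) * ln (1 - d)"

lemma gibbs_inequality:
  fixes t d :: real assumes "0 \<le> t" "t \<le> 1" "0 < d" "d < 1"
  shows "log_score t d \<le> - bin_entropy t"
    and "0 < t \<Longrightarrow> t < 1 \<Longrightarrow> d \<noteq> t \<Longrightarrow> log_score t d < - bin_entropy t"
proof -
  have gap: "log_score t d + bin_entropy t = t * (ln d - ln t) + (1 - t) * (ln (1 - d) - ln (1 - t))"
    if "0 < t" "t < 1"
    using that by (simp add: bin_entropy_def plogp_def log_score_def algebra_simps)
  consider "t = 0" | "t = 1" | "0 < t \<and> t < 1" using assms by linarith
  then show "log_score t d \<le> - bin_entropy t"
  proof cases
    case 3
    then show ?thesis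
      using gap ln_ratio_le(1)[of t d] ln_ratio_le(1)[of "1 - t" "1 - d"] assms by auto
  qed (use assms in \<open>auto simp: log_score_def bin_entropy_def plogp_def\<close>)
  assume "0 < t" "t < 1" "d \<noteq> t"
  then show "log_score t d < - bin_entropy t"
    using gap ln_ratio_le(2)[of t d] ln_ratio_le(1)[of "1 - t" "1 - d"] assms by auto
qed

text \<open>The entropy bound S(t) >= 4 ln 2 t (1-t) is proved through the function phi below, whose
  derivative is ln (1+x) - ln (1-x); this estimate bounds that derivative by x phi''(x).\<close>
lemma artanh_bound:
  fixes x :: real assumes "0 \<le> x" "x < 1"
  shows "ln (1 + x) - ln (1 - x) \<le> 2 * x / (1 - x\<^sup>2)"
proof -
  define h where "h t = 2 * t / (1 - t\<^sup>2) - (ln (1 + t) - ln (1 - t))" for t :: real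
  have "h 0 \<le> h x"
  proof (rule DERIV_nonneg_imp_nondecreasing[OF assms(1)])
    fix t assume t: "0 \<le> t" "t \<le> x"
    then have t1: "0 < 1 - t" "0 < 1 + t" using assms by auto
    have factor: "1 - t\<^sup>2 = (1 + t) * (1 - t)" by (simp add: algebra_simps power2_eq_square)
    have "(h has_real_derivative (2 * (1 - t\<^sup>2) + 2 * t * (2 * t)) / (1 - t\<^sup>2)\<^sup>2 - (1 / (1 + t) + 1 / (1 - t))) (at t)"
      unfolding h_def using t1 factor by (auto intro!: derivative_eq_intros simp: power2_eq_square)
    moreover have "(2 * (1 - t\<^sup>2) + 2 * t * (2 * t)) / (1 - t\<^sup>2)\<^sup>2 - (1 / (1 + t) + 1 / (1 - t))
        = 4 * t\<^sup>2 / (1 - t\<^sup>2)\<^sup>2"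
      unfolding factor using t1 by (simp add: divide_simps) (simp add: algebra_simps power2_eq_square)
    ultimately show "\<exists>y. (h has_real_derivative y) (at t) \<and> 0 \<le> y" by auto
  qed
  then show ?thesis by (simp add: h_def)
qed

definition phi :: "real \<Rightarrow> real" where
  "phi x = (1 + x) * ln (1 + x) + (1 - x) * ln (1 - x)"

lemma phi_deriv:
  fixes t :: real assumes "-1 < t" "t < 1"
  shows "(phi has_real_derivative (ln (1 + t) - ln (1 - t))) (at t)"
  unfolding phi_def using assms by (auto intro!: derivative_eq_intros)

text \<open>Numerator of the derivative of phi(x)/x^2 is nonnegative.\<close>
lemma phi_le_chord:
  fixes x :: real assumes "0 \<le> x" "x < 1"
  shows "2 * phi x \<le> x * (ln (1 + x) - ln (1 - x))"
proof -
  define h where "h t = t * (ln (1 + t) - ln (1 - t)) - 2 * phi t" for t :: real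
  have "h 0 \<le> h x"
  proof (rule DERIV_nonneg_imp_nondecreasing[OF assms(1)])
    fix t assume t: "0 \<le> t" "t \<le> x"
    then have t1: "0 < 1 - t" "0 < 1 + t" using assms by auto
    have factor: "1 - t\<^sup>2 = (1 + t) * (1 - t)" by (simp add: algebra_simps power2_eq_square)
    have "(h has_real_derivative (t * (1 / (1 + t) + 1 / (1 - t)) - (ln (1 + t) - ln (1 - t)))) (at t)"
      unfolding h_def using t1 by (auto intro!: derivative_eq_intros phi_deriv simp: algebra_simps)
    moreover have "t * (1 / (1 + t) + 1 / (1 - t)) = 2 * t / (1 - t\<^sup>2)"
      unfolding factor using t1 by (simp add: field_simps)
    ultimately show "\<exists>y. (h has_real_derivative y) (at t) \<and> 0 \<le> y"
      using artanh_bound[of t] t assms by auto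
  qed
  then show ?thesis by (simp add: h_def phi_def)
qed

lemma phi_over_square_mono:
  fixes x y :: real assumes "0 < x" "x \<le> y" "y < 1"
  shows "phi x / x\<^sup>2 \<le> phi y / y\<^sup>2"
proof (rule DERIV_nonneg_imp_nondecreasing[OF assms(2)])
  fix t assume t: "x \<le> t" "t \<le> y"
  then have t1: "0 < t" "t < 1" using assms by auto
  have "((\<lambda>t. phi t / t\<^sup>2) has_real_derivative
          (t * (ln (1 + t) - ln (1 - t)) - 2 * phi t) / t ^ 3) (at t)"
    using t1 by (auto intro!: derivative_eq_intros phi_deriv)
      (simp add: divide_simps eval_nat_numeral algebra_simps)
  then show "\<exists>d. ((\<lambda>t. phi t / t\<^sup>2) has_real_derivative d) (at t) \<and> 0 \<le> d"
    using phi_le_chord[of t] t1 by (auto intro!: divide_nonneg_pos)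
qed

lemma phi_over_square_limit: "((\<lambda>y. phi y / y\<^sup>2) \<longlongrightarrow> 2 * ln 2) (at_left 1)"
  unfolding phi_def by real_asymp

text \<open>Monotonicity together with the limit at 1 bounds phi by its value at the endpoint.\<close>
lemma phi_le:
  fixes x :: real assumes "0 \<le> x" "x < 1"
  shows "phi x \<le> 2 * ln 2 * x\<^sup>2"
proof (cases "x = 0")
  case True then show ?thesis by (simp add: phi_def)
next
  case False
  then have x: "0 < x" using assms by auto
  have "eventually (\<lambda>y. phi x / x\<^sup>2 \<le> phi y / y\<^sup>2) (at_left 1)"
    using eventually_at_left_real[OF assms(2)]
    by eventually_elim (use x phi_over_square_mono in auto)
  then have "phi x / x\<^sup>2 \<le> 2 * ln 2"
    by (intro tendsto_le[OF trivial_limit_at_left_real phi_over_square_limit tendsto_const])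
  then show ?thesis using x by (simp add: divide_simps)
qed

lemma bin_entropy_phi:
  fixes x :: real assumes "0 \<le> x" "x < 1"
  shows "bin_entropy ((1 - x) / 2) = ln 2 - phi x / 2"
proof -
  have minus: "plogp ((1 - x) / 2) = (1 - x) / 2 * (ln (1 - x) - ln 2)"
    using assms by (simp add: plogp_def ln_div)
  have complement: "1 - (1 - x) / 2 = (1 + x) / 2" by (simp add: field_simps)
  have plus: "plogp (1 - (1 - x) / 2) = (1 + x) / 2 * (ln (1 + x) - ln 2)"
    unfolding complement plogp_def using assms by (simp add: ln_div)
  show ?thesis
    unfolding bin_entropy_def minus plus phi_def by (simp add: field_simps)
qed

text \<open>The entropy is symmetric about 1/2, so it suffices to bound it on [0, 1/2].\<close>
lemma bin_entropy_sym: "bin_entropy (1 - t) = bin_entropy t"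
  by (simp add: bin_entropy_def)

lemma bin_entropy_lower_bound:
  fixes t :: real assumes "0 \<le> t" "t \<le> 1"
  shows "4 * ln 2 * t * (1 - t) \<le> bin_entropy t"
proof -
  have half: "4 * ln 2 * s * (1 - s) \<le> bin_entropy s" if "0 \<le> s" "s \<le> 1/2" for s :: real
  proof (cases "s = 0")
    case False
    define x where "x = 1 - 2 * s"
    have x: "0 \<le> x" "x < 1" "s = (1 - x) / 2" using that False by (auto simp: x_def)
    have "4 * ln 2 * s * (1 - s) = ln 2 - ln 2 * x\<^sup>2"
      unfolding x(3) by (simp add: field_simps power2_eq_square)
    also have "\<dots> \<le> ln 2 - phi x / 2" using phi_le[OF x(1,2)] by simp
    also have "\<dots> = bin_entropy s" unfolding x(3) using bin_entropy_phi[OF x(1,2)] by simp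
    finally show ?thesis .
  qed (simp add: bin_entropy_def plogp_def)
  show ?thesis
  proof (cases "t \<le> 1/2")
    case False
    then show ?thesis using half[of "1 - t"] assms by (simp add: bin_entropy_sym algebra_simps)
  qed (use half assms in auto)
qed

lemma ln_fifths: "ln (4/5 :: real) = 2 * ln 2 - ln 5" "ln (1/5 :: real) = - ln 5"
proof -
  have "ln (4 :: real) = 2 * ln 2" using ln_realpow[of 2 2] by simp
  then show "ln (4/5 :: real) = 2 * ln 2 - ln 5" by (simp add: ln_div)
  show "ln (1/5 :: real) = - ln 5" by (simp add: ln_div)
qed

text \<open>The sum of log-scores log_score (4/5) d1 + log_score (1/5) d0 appears both in the three-point
  average of the risk and in the Bayes risk under the moment conditions; its value at (1/5, 4/5):\<close>
lemma fifths_score_value: "log_score (4/5) (4/5) + log_score (1/5) (1/5) = 16/5 * ln 2 - 2 * ln 5"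
  by (simp add: log_score_def ln_fifths algebra_simps)

text \<open>By Gibbs' inequality that sum is maximal exactly at (d0, d1) = (1/5, 4/5).\<close>
lemma fifths_score_bound:
  assumes "0 < d0" "d0 < 1" "0 < d1" "d1 < 1"
  shows "log_score (4/5) d1 + log_score (1/5) d0 \<le> 16/5 * ln 2 - 2 * ln 5"
    and "(d0, d1) \<noteq> (1/5, 4/5) \<Longrightarrow> log_score (4/5) d1 + log_score (1/5) d0 < 16/5 * ln 2 - 2 * ln 5"
proof -
  have entropy: "bin_entropy (4/5) = ln 5 - 8/5 * ln 2" "bin_entropy (1/5) = ln 5 - 8/5 * ln 2"
    by (simp_all add: bin_entropy_def plogp_def ln_fifths algebra_simps)
  show "log_score (4/5) d1 + log_score (1/5) d0 \<le> 16/5 * ln 2 - 2 * ln 5"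
    using gibbs_inequality(1)[of "4/5" d1] gibbs_inequality(1)[of "1/5" d0] assms entropy by simp
  assume "(d0, d1) \<noteq> (1/5, 4/5)"
  then consider "d1 \<noteq> 4/5" | "d0 \<noteq> 1/5" by auto
  then show "log_score (4/5) d1 + log_score (1/5) d0 < 16/5 * ln 2 - 2 * ln 5"
  proof cases
    case 1
    then show ?thesis
      using gibbs_inequality(2)[of "4/5" d1] gibbs_inequality(1)[of "1/5" d0] assms entropy by simp
  next
    case 2
    then show ?thesis
      using gibbs_inequality(1)[of "4/5" d1] gibbs_inequality(2)[of "1/5" d0] assms entropy by simp
  qed
qed

text \<open>The Kullback--Leibler risk of an interior decision, as a real number: past data x = 1 leads to the
  prediction d1 (probability theta), x = 0 to d0.\<close>
definition risk :: "real \<Rightarrow> real \<Rightarrow> real \<Rightarrow> real" where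
  "risk d0 d1 \<theta> = - bin_entropy \<theta> - \<theta> * log_score \<theta> d1 - (1 - \<theta>) * log_score \<theta> d0"

lemma xlog_pos: "0 < d \<Longrightarrow> xlog c d = ereal (- c * ln d)"
  by (simp add: xlog_def ln_div)

lemma KL_risk_interior:
  assumes "0 < d0" "d0 < 1" "0 < d1" "d1 < 1"
  shows "KL_risk (d0, d1) \<theta> = ereal (risk d0 d1 \<theta>)"
  using assms by (simp add: KL_risk_def xlog_pos risk_def log_score_def
      algebra_simps power2_eq_square)

lemma KL_risk_boundary:
  assumes "\<delta> \<in> decisions" "\<delta> \<notin> {0<..<1} \<times> {0<..<1}" "0 < \<theta>" "\<theta> < 1"
  shows "KL_risk \<delta> \<theta> = \<infinity>"
proof -
  obtain d0 d1 where \<delta>: "\<delta> = (d0, d1)" by (cases \<delta>)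
  have "d0 = 0 \<or> d0 = 1 \<or> d1 = 0 \<or> d1 = 1" using assms(1,2) by (auto simp: \<delta> decisions_def)
  moreover have "\<theta>\<^sup>2 \<noteq> 0" "\<theta> * (1 - \<theta>) \<noteq> 0" "(1 - \<theta>)\<^sup>2 \<noteq> 0" using assms(3,4) by auto
  ultimately show ?thesis by (auto simp: \<delta> KL_risk_def xlog_def)
qed

text \<open>The risk is a mixture of two Gibbs gaps, hence nonnegative.\<close>
lemma risk_nonneg:
  assumes "0 < d0" "d0 < 1" "0 < d1" "d1 < 1" "0 \<le> \<theta>" "\<theta> \<le> 1"
  shows "0 \<le> risk d0 d1 \<theta>"
proof -
  have "risk d0 d1 \<theta> = \<theta> * (- bin_entropy \<theta> - log_score \<theta> d1) + (1 - \<theta>) * (- bin_entropy \<theta> - log_score \<theta> d0)"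
    by (simp add: risk_def algebra_simps)
  moreover have "log_score \<theta> d1 \<le> - bin_entropy \<theta>" "log_score \<theta> d0 \<le> - bin_entropy \<theta>"
    using gibbs_inequality(1) assms by auto
  ultimately show ?thesis using assms by simp
qed

lemma risk_fifths:
  "risk (1/5) (4/5) \<theta> = ln 5 - 2 * ln 2 - (bin_entropy \<theta> - 4 * ln 2 * \<theta> * (1 - \<theta>))"
  by (simp add: risk_def log_score_def ln_fifths algebra_simps power2_eq_square)

lemma three_point_identity:
  "3/10 * risk d0 d1 0 + 2/5 * risk d0 d1 (1/2) + 3/10 * risk d0 d1 1
     = - 2/5 * ln 2 - (log_score (4/5) d1 + log_score (1/5) d0) / 2"
  by (simp add: risk_def log_score_def bin_entropy_def plogp_def ln_div algebra_simps)

lemma max_risk_lower_bound: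
  assumes "\<delta> \<in> decisions" "max_risk \<delta> \<le> ereal M"
  shows "ln 5 - 2 * ln 2 \<le> M"
    and "\<delta> \<noteq> (1/5, 4/5) \<Longrightarrow> ln 5 - 2 * ln 2 < M"
proof -
  have bounded: "KL_risk \<delta> \<theta> \<le> ereal M" if "\<theta> \<in> {0..1}" for \<theta>
    using SUP_upper[OF that, of "KL_risk \<delta>"] assms(2) unfolding max_risk_def by simp
  from this[of "1/2"] have "KL_risk \<delta> (1/2) \<noteq> \<infinity>" by auto
  then have "\<delta> \<in> {0<..<1} \<times> {0<..<1}" using KL_risk_boundary[OF assms(1)] by force
  then obtain d0 d1 where \<delta>: "\<delta> = (d0, d1)" and d: "0 < d0" "d0 < 1" "0 < d1" "d1 < 1" by auto
  have "risk d0 d1 \<theta> \<le> M" if "\<theta> \<in> {0..1}" for \<theta>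
    using bounded[OF that] unfolding \<delta> KL_risk_interior[OF d] by simp
  from this[of 0] this[of "1/2"] this[of 1]
  have average: "- 2/5 * ln 2 - (log_score (4/5) d1 + log_score (1/5) d0) / 2 \<le> M"
    unfolding three_point_identity[symmetric] by simp
  show "ln 5 - 2 * ln 2 \<le> M" using average fifths_score_bound(1)[OF d] by argo
  assume "\<delta> \<noteq> (1/5, 4/5)"
  then show "ln 5 - 2 * ln 2 < M" using average fifths_score_bound(2)[OF d] \<delta> by argo
qed

text \<open>By the entropy bound the risk of (1/5, 4/5) never exceeds ln 5 - 2 ln 2.\<close>
lemma max_risk_fifths: "max_risk (1/5, 4/5) \<le> ereal (ln 5 - 2 * ln 2)"
  unfolding max_risk_def
proof (rule SUP_least)
  fix \<theta> :: real assume "\<theta> \<in> {0..1}"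
  then show "KL_risk (1/5, 4/5) \<theta> \<le> ereal (ln 5 - 2 * ln 2)"
    using KL_risk_interior[of "1/5" "4/5" \<theta>] risk_fifths[of \<theta>] bin_entropy_lower_bound[of \<theta>]
    by simp
qed

theorem minimax_iff: "is_minimax \<delta> \<longleftrightarrow> \<delta> = (1/5, 4/5)"
proof
  assume "is_minimax \<delta>"
  then have "\<delta> \<in> decisions" "max_risk \<delta> \<le> max_risk (1/5, 4/5)"
    by (auto simp: is_minimax_def decisions_def)
  then have "\<delta> \<in> decisions" "max_risk \<delta> \<le> ereal (ln 5 - 2 * ln 2)"
    using max_risk_fifths by auto
  then show "\<delta> = (1/5, 4/5)" using max_risk_lower_bound(2) by blast
next
  assume \<delta>: "\<delta> = (1/5, 4/5)"
  have "max_risk (1/5, 4/5) \<le> max_risk \<delta>'" if "\<delta>' \<in> decisions" for \<delta>'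
  proof -
    have "ereal (ln 5 - 2 * ln 2) \<le> max_risk \<delta>'"
      by (rule ereal_le_real) (use max_risk_lower_bound(1)[OF that] in auto)
    then show ?thesis using max_risk_fifths by (rule order.trans[rotated])
  qed
  then show "is_minimax \<delta>" unfolding is_minimax_def \<delta> by (simp add: decisions_def)
qed

lemma weighted_log_stationary:
  fixes a b p :: real
  assumes "0 < p" "p < 1"
    and max: "\<And>y. 0 < y \<Longrightarrow> y < 1 \<Longrightarrow> a * ln y + b * ln (1 - y) \<le> a * ln p + b * ln (1 - p)"
  shows "a * (1 - p) = b * p"
proof -
  have deriv: "((\<lambda>y. a * ln y + b * ln (1 - y)) has_real_derivative a / p - b / (1 - p)) (at p)"
    using assms(1,2) by (auto intro!: derivative_eq_intros)
  have "\<forall>y. \<bar>p - y\<bar> < min p (1 - p) \<longrightarrow> a * ln y + b * ln (1 - y) \<le> a * ln p + b * ln (1 - p)"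
    using max by (auto simp: abs_less_iff)
  then have "a / p - b / (1 - p) = 0"
    by (rule DERIV_local_max[OF deriv, rotated]) (use assms(1,2) in simp)
  then show ?thesis using assms(1,2) by (simp add: field_simps)
qed

lemma bin_entropy_bounds:
  fixes t :: real assumes "0 \<le> t" "t \<le> 1"
  shows "0 \<le> bin_entropy t" "bin_entropy t \<le> ln 2"
proof -
  have "0 \<le> 4 * ln 2 * t * (1 - t)" using assms by simp
  then show "0 \<le> bin_entropy t" using bin_entropy_lower_bound[OF assms] by linarith
  have "log_score t (1/2) = - ln 2" by (simp add: log_score_def ln_div algebra_simps)
  then show "bin_entropy t \<le> ln 2" using gibbs_inequality(1)[OF assms, of "1/2"] by simp
qed

lemma bin_entropy_measurable [measurable]: "bin_entropy \<in> borel_measurable borel"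
proof -
  have plogp_eq: "plogp = (\<lambda>x. x * ln x)" by (rule ext) (simp add: plogp_def)
  show ?thesis unfolding bin_entropy_def[abs_def] plogp_eq by measurable
qed

locale prior =
  fixes \<pi> :: "real measure"
  assumes prob: "prob_space \<pi>" and sets_borel: "sets \<pi> = sets borel"
    and unit_mass: "emeasure \<pi> {0..1} = 1"
begin

sublocale prob_space \<pi> by (rule prob)

lemma borel_measurable_prior: "(f :: real \<Rightarrow> real) \<in> borel_measurable borel \<Longrightarrow> f \<in> borel_measurable \<pi>"
  using measurable_cong_sets[OF sets_borel refl, where N = borel] by blast

lemma AE_unit: "AE \<theta> in \<pi>. \<theta> \<in> {0..1}"
  by (rule AE_prob_1) (simp add: unit_mass measure_def)

lemma integrable_bounded:
  assumes "f \<in> borel_measurable borel" "\<And>\<theta>. \<theta> \<in> {0..1} \<Longrightarrow> \<bar>f \<theta>\<bar> \<le> (B :: real)"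
  shows "integrable \<pi> f"
proof (rule integrable_const_bound[where B = B])
  show "AE \<theta> in \<pi>. norm (f \<theta>) \<le> B" using AE_unit by eventually_elim (use assms(2) in auto)
qed (rule borel_measurable_prior[OF assms(1)])

lemma integrable_moments [simp]:
  "integrable \<pi> (\<lambda>\<theta>. \<theta>)" "integrable \<pi> (\<lambda>\<theta>. \<theta>\<^sup>2)" "integrable \<pi> bin_entropy"
proof -
  show "integrable \<pi> (\<lambda>\<theta>. \<theta>)" "integrable \<pi> (\<lambda>\<theta>. \<theta>\<^sup>2)"
    by (rule integrable_bounded[where B = 1]; auto simp: abs_le_iff power_le_one)+
  show "integrable \<pi> bin_entropy"
    by (rule integrable_bounded[where B = "ln 2"]) (use bin_entropy_bounds in auto)
qed

text \<open>The Bayes risk of an interior decision depends on the prior only through the mean, the second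
  moment and the mean entropy.\<close>
definition mean :: real where "mean = (\<integral>\<theta>. \<theta> \<partial>\<pi>)"
definition second_moment :: real where "second_moment = (\<integral>\<theta>. \<theta>\<^sup>2 \<partial>\<pi>)"
definition mean_entropy :: real where "mean_entropy = (\<integral>\<theta>. bin_entropy \<theta> \<partial>\<pi>)"

definition bayes_value :: "real \<Rightarrow> real \<Rightarrow> real" where
  "bayes_value d0 d1 = - mean_entropy
     - (second_moment * ln d1 + (mean - second_moment) * ln (1 - d1))
     - ((mean - second_moment) * ln d0 + (1 - 2 * mean + second_moment) * ln (1 - d0))"

text \<open>The Bayes risk of an interior decision, computed by integrating risk written as
  minus the entropy minus a quadratic polynomial in theta.\<close>
lemma bayes_risk_interior:
  assumes d: "0 < d0" "d0 < 1" "0 < d1" "d1 < 1"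
  shows "bayes_risk \<pi> (d0, d1) = ennreal (bayes_value d0 d1)" and "0 \<le> bayes_value d0 d1"
proof -
  define A where "A = ln d1 - ln (1 - d1) - ln d0 + ln (1 - d0)"
  define B where "B = ln (1 - d1) + ln d0 - 2 * ln (1 - d0)"
  define C where "C = ln (1 - d0)"
  have quadratic: "risk d0 d1 = (\<lambda>\<theta>. - bin_entropy \<theta> - (A * \<theta>\<^sup>2 + B * \<theta> + C))"
    by (rule ext) (simp add: risk_def log_score_def A_def B_def C_def algebra_simps power2_eq_square)
  have integrable: "integrable \<pi> (risk d0 d1)" unfolding quadratic by simp
  have integral: "(\<integral>\<theta>. risk d0 d1 \<theta> \<partial>\<pi>) = bayes_value d0 d1"
    unfolding quadratic by (simp add: mean_def second_moment_def mean_entropy_def bayes_value_def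
        A_def B_def C_def prob_space algebra_simps)
  have nonneg: "AE \<theta> in \<pi>. 0 \<le> risk d0 d1 \<theta>"
    using AE_unit by eventually_elim (use risk_nonneg d in auto)
  have "bayes_risk \<pi> (d0, d1) = (\<integral>\<^sup>+ \<theta>. ennreal (risk d0 d1 \<theta>) \<partial>\<pi>)"
    unfolding bayes_risk_def
    by (rule nn_integral_cong_AE, use AE_unit in eventually_elim) (auto simp: KL_risk_interior[OF d])
  also have "\<dots> = ennreal (bayes_value d0 d1)"
    using nn_integral_eq_integral[OF integrable nonneg] integral by simp
  finally show "bayes_risk \<pi> (d0, d1) = ennreal (bayes_value d0 d1)" .
  show "0 \<le> bayes_value d0 d1" using integral_nonneg_AE[OF nonneg] integral by simp
qed

text \<open>If mean and second moment differ, the prior charges the open interval, so boundary decisions have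
  infinite Bayes risk.\<close>
lemma interior_mass:
  assumes "mean \<noteq> second_moment"
  shows "emeasure \<pi> {0<..<1} \<noteq> 0"
proof
  assume "emeasure \<pi> {0<..<1} = 0"
  then have "AE \<theta> in \<pi>. \<theta> \<notin> {0<..<1}"
    using AE_not_in[of "{0<..<1}" \<pi>] sets_borel by (simp add: null_sets_def)
  then have "AE \<theta> in \<pi>. \<theta>\<^sup>2 = \<theta>"
    using AE_unit by eventually_elim (auto simp: power2_eq_square)
  then have "second_moment = mean" unfolding mean_def second_moment_def
    by (intro integral_cong_AE) (auto intro: borel_measurable_prior)
  then show False using assms by simp
qed

lemma bayes_risk_boundary:
  assumes "mean \<noteq> second_moment" "\<delta> \<in> decisions" "\<delta> \<notin> {0<..<1} \<times> {0<..<1}"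
  shows "bayes_risk \<pi> \<delta> = \<top>"
proof -
  have "(\<integral>\<^sup>+ \<theta>. \<top> * indicator {0<..<1} \<theta> \<partial>\<pi>) \<le> bayes_risk \<pi> \<delta>"
    unfolding bayes_risk_def
    by (rule nn_integral_mono) (auto simp: indicator_def KL_risk_boundary[OF assms(2,3)])
  moreover have "(\<integral>\<^sup>+ \<theta>. \<top> * indicator {0<..<1} \<theta> \<partial>\<pi>) = \<top>"
    using nn_integral_cmult_indicator[of "{0<..<1}" \<pi> \<top>] sets_borel interior_mass[OF assms(1)]
    by (simp add: ennreal_top_mult)
  ultimately show ?thesis by (simp add: top_unique)
qed

theorem bayes_fifths_iff:
  "is_bayes \<pi> (1/5, 4/5) \<longleftrightarrow> mean = 1/2 \<and> second_moment = 2/5"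
proof
  assume bayes: "is_bayes \<pi> (1/5, 4/5)"
  have optimal: "bayes_value (1/5) (4/5) \<le> bayes_value d0 d1"
    if "0 < d0" "d0 < 1" "0 < d1" "d1 < 1" for d0 d1
  proof -
    have "(d0, d1) \<in> decisions" using that by (simp add: decisions_def)
    then have "bayes_risk \<pi> (1/5, 4/5) \<le> bayes_risk \<pi> (d0, d1)"
      using bayes by (simp add: is_bayes_def)
    then show ?thesis
      using bayes_risk_interior[OF that] bayes_risk_interior[of "1/5" "4/5"] by (simp add: ennreal_le_iff)
  qed
  have "second_moment * ln y + (mean - second_moment) * ln (1 - y)
      \<le> second_moment * ln (4/5) + (mean - second_moment) * ln (1 - 4/5)" if "0 < y" "y < 1" for y
    using optimal[of "1/5" y] that unfolding bayes_value_def by linarith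
  then have "second_moment * (1 - 4/5) = (mean - second_moment) * (4/5)"
    by (intro weighted_log_stationary) auto
  moreover
  have "(mean - second_moment) * ln y + (1 - 2 * mean + second_moment) * ln (1 - y)
      \<le> (mean - second_moment) * ln (1/5) + (1 - 2 * mean + second_moment) * ln (1 - 1/5)"
    if "0 < y" "y < 1" for y
    using optimal[of y "4/5"] that unfolding bayes_value_def by linarith
  then have "(mean - second_moment) * (1 - 1/5) = (1 - 2 * mean + second_moment) * (1/5)"
    by (intro weighted_log_stationary) auto
  ultimately show "mean = 1/2 \<and> second_moment = 2/5" by (simp add: field_simps)
next
  assume "mean = 1/2 \<and> second_moment = 2/5"
  then have moments: "mean = 1/2" "second_moment = 2/5" by auto
  have score_form: "bayes_value d0 d1 = - mean_entropy - (log_score (4/5) d1 + log_score (1/5) d0) / 2" for d0 d1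
    unfolding bayes_value_def log_score_def moments by argo
  have "bayes_risk \<pi> (1/5, 4/5) \<le> bayes_risk \<pi> \<delta>" if "\<delta> \<in> decisions" for \<delta>
  proof (cases "\<delta> \<in> {0<..<1} \<times> {0<..<1}")
    case True
    then obtain d0 d1 where \<delta>: "\<delta> = (d0, d1)" and d: "0 < d0" "d0 < 1" "0 < d1" "d1 < 1" by auto
    have "bayes_value (1/5) (4/5) \<le> bayes_value d0 d1"
      unfolding score_form using fifths_score_bound(1)[OF d] fifths_score_value by argo
    then show ?thesis unfolding \<delta> using bayes_risk_interior[OF d] bayes_risk_interior[of "1/5" "4/5"]
      by (simp add: ennreal_leI)
  next
    case False
    then show ?thesis using bayes_risk_boundary[OF _ that] moments by simp
  qed
  then show "is_bayes \<pi> (1/5, 4/5)" unfolding is_bayes_def by (simp add: decisions_def)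
qed

end


theorem corollary1:
  fixes \<pi> :: "real measure"
  assumes "prob_space \<pi>" and "sets \<pi> = sets borel" and "emeasure \<pi> {0..1} = 1"
  shows "minimax_prior \<pi> \<longleftrightarrow>
           (\<integral>\<theta>. \<theta> \<partial>\<pi>) = 1/2 \<and> (\<integral>\<theta>. \<theta>\<^sup>2 \<partial>\<pi>) = 2/5"
proof -
  interpret prior \<pi> by (rule prior.intro[OF assms])
  have "minimax_prior \<pi> \<longleftrightarrow> is_bayes \<pi> (1/5, 4/5)"
    unfolding minimax_prior_def minimax_iff by blast
  also have "\<dots> \<longleftrightarrow> mean = 1/2 \<and> second_moment = 2/5"
    by (rule bayes_fifths_iff)
  finally show ?thesis unfolding mean_def second_moment_def .
qed

end
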